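(* Let $(X^{(t)})_{t \in \mathbb{N}}$ be a sequence of real-valued random variables with bounded range, and let $(Y^{(t)})_{t \in \mathbb{N}}$ be a sequence of real-valued random variables that are zero-mean, range-bounded, and independent and identically distributed. Suppose the sequences $(X^{(t)})_{t \in \mathbb{N}}$ and $(Y^{(t)})_{t \in \mathbb{N}}$ are independent of each other. Define $Z^{(t)} \coloneqq X^{(t)} Y^{(t)}$. Then \[ \lim_{k \to \infty} \frac{1}{k+1}\sum_{t=0}^{k} Z^{(t)} = 0 \quad \text{almost surely.} \]
   Context: All random variables are defined on a common probability space. "Bounded range" means the random variables take values in a bounded subset of $\mathbb{R}$. *)

theory Defs
  imports "HOL-Probability.Probability"
begin

end

theory Submission
  imports Defs "HOL-Library.Discrete_Functions"
begin

text \<open>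
  The products \<open>Z\<^sub>t = X\<^sub>t Y\<^sub>t\<close> are uniformly bounded and pairwise orthogonal: for \<open>a \<noteq> b\<close>,
  independence of the two sequences factors \<open>E[Z\<^sub>a Z\<^sub>b]\<close> as \<open>E[X\<^sub>a X\<^sub>b] E[Y\<^sub>a Y\<^sub>b]\<close>, and
  \<open>E[Y\<^sub>a Y\<^sub>b] = E[Y\<^sub>a] E[Y\<^sub>b] = 0\<close>. For orthogonal variables bounded by \<open>K\<close> the partial
  sums \<open>S\<^sub>n\<close> satisfy \<open>E[S\<^sub>n\<^sup>2] \<le> (n+1) K\<^sup>2\<close>, so along the squares \<open>n = r\<^sup>2 - 1\<close> the
  expectations of \<open>(S\<^sub>n/r\<^sup>2)\<^sup>2\<close> are summable and \<open>S\<^sub>n/r\<^sup>2 \<rightarrow> 0\<close> almost surely. Between two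
  consecutive squares the partial sums move by at most \<open>2rK\<close>, which is \<open>o(r\<^sup>2)\<close>
  (Rajchman's argument).
\<close>

lemma abs_diff_le_of_bounded_increments:
  fixes s :: "nat \<Rightarrow> real"
  assumes step: "\<And>k. \<bar>s (Suc k) - s k\<bar> \<le> K"
  shows "\<bar>s (j + d) - s j\<bar> \<le> K * real d"
proof (induction d)
  case 0
  then show ?case by simp
next
  case (Suc d)
  have "\<bar>s (j + Suc d) - s j\<bar> \<le> \<bar>s (Suc (j + d)) - s (j + d)\<bar> + \<bar>s (j + d) - s j\<bar>"
    by simp
  also have "\<dots> \<le> K + K * real d"
    using step[of "j + d"] Suc by linarith
  finally show ?case
    by (simp add: algebra_simps)
qed

lemma average_le_square_average:
  fixes s :: "nat \<Rightarrow> real"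
  assumes step: "\<And>k. \<bar>s (Suc k) - s k\<bar> \<le> K"
    and r: "1 \<le> r" "r\<^sup>2 \<le> k + 1" "k + 1 < (Suc r)\<^sup>2"
  shows "\<bar>s k / real (k + 1)\<bar> \<le> \<bar>s (r\<^sup>2 - 1) / real (r\<^sup>2)\<bar> + 2 * K / real r"
proof -
  define j where "j = r\<^sup>2 - 1"
  have K: "0 \<le> K"
    using step[of 0] by linarith
  have "real (r\<^sup>2) \<le> real (k + 1)"
    using r(2) by (simp only: of_nat_le_iff)
  have "j \<le> k" and "k - j \<le> 2 * r"
    using r by (auto simp: j_def power2_eq_square)
  then have "\<bar>s k - s j\<bar> \<le> K * real (k - j)"
    using abs_diff_le_of_bounded_increments[of s K j "k - j", OF step] by simp
  also have "\<dots> \<le> K * (2 * real r)"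
    using \<open>k - j \<le> 2 * r\<close> K by (intro mult_left_mono) auto
  finally have "\<bar>s k\<bar> / real (k + 1) \<le> \<bar>s j\<bar> / real (k + 1) + 2 * K * real r / real (k + 1)"
    by (simp add: add_divide_distrib[symmetric] divide_right_mono)
  also have "\<dots> \<le> \<bar>s j\<bar> / real (r\<^sup>2) + 2 * K * real r / real (r\<^sup>2)"
    using r K \<open>real (r\<^sup>2) \<le> real (k + 1)\<close> by (intro add_mono divide_left_mono) auto
  also have "2 * K * real r / real (r\<^sup>2) = 2 * K / real r"
    using r by (simp add: power2_eq_square)
  finally show ?thesis
    by (simp add: j_def)
qed

lemma averages_tendsto_zero_if_square_averages:
  fixes s :: "nat \<Rightarrow> real"
  assumes step: "\<And>k. \<bar>s (Suc k) - s k\<bar> \<le> K"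
    and squares: "(\<lambda>r. s (r\<^sup>2 - 1) / real (r\<^sup>2)) \<longlonglongrightarrow> 0"
  shows "(\<lambda>k. s k / real (k + 1)) \<longlonglongrightarrow> 0"
proof -
  define b where "b r = \<bar>s (r\<^sup>2 - 1) / real (r\<^sup>2)\<bar> + 2 * K / real r" for r
  have "b \<longlonglongrightarrow> 0"
    unfolding b_def
    using tendsto_add[OF tendsto_rabs_zero[OF squares] tendsto_divide_0[OF tendsto_const
          filterlim_at_top_imp_at_infinity[OF filterlim_real_sequentially]]]
    by simp
  moreover have "filterlim (\<lambda>k. floor_sqrt (k + 1)) at_top sequentially"
    unfolding filterlim_at_top eventually_sequentially
  proof
    fix Z :: nat
    show "\<exists>N. \<forall>k\<ge>N. Z \<le> floor_sqrt (k + 1)"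
      by (intro exI[of _ "Z\<^sup>2"]) (auto intro!: le_floor_sqrtI)
  qed
  ultimately have b_sqrt: "(\<lambda>k. b (floor_sqrt (k + 1))) \<longlonglongrightarrow> 0"
    by (rule filterlim_compose)
  have bound: "norm (s k / real (k + 1)) \<le> b (floor_sqrt (k + 1))" for k
    unfolding b_def real_norm_def
  proof (rule average_le_square_average[of s K, OF step])
    show "1 \<le> floor_sqrt (k + 1)"
      by (simp add: le_floor_sqrtI)
    show "(floor_sqrt (k + 1))\<^sup>2 \<le> k + 1"
      by simp
    show "k + 1 < (Suc (floor_sqrt (k + 1)))\<^sup>2"
      by (rule Suc_floor_sqrt_power2_gt)
  qed
  show ?thesis
    by (rule Lim_null_comparison[OF always_eventually b_sqrt]) (use bound in blast)
qed

lemma (in prob_space) AE_summable_if_summable_expectation: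
  fixes f :: "nat \<Rightarrow> 'a \<Rightarrow> real"
  assumes [measurable]: "\<And>i. f i \<in> borel_measurable M"
    and nonneg: "\<And>i x. 0 \<le> f i x"
    and integrable: "\<And>i. integrable M (f i)"
    and summable: "summable (\<lambda>i. expectation (f i))"
  shows "AE x in M. summable (\<lambda>i. f i x)"
proof -
  have "(\<integral>\<^sup>+x. (\<Sum>i. ennreal (f i x)) \<partial>M) = (\<Sum>i. \<integral>\<^sup>+x. ennreal (f i x) \<partial>M)"
    by (intro nn_integral_suminf) auto
  also have "\<dots> = (\<Sum>i. ennreal (expectation (f i)))"
    by (intro arg_cong[where f=suminf] ext nn_integral_eq_integral integrable) (auto simp: nonneg)
  also have "\<dots> \<noteq> top"
    by (intro ennreal_suminf_neq_top summable integral_nonneg_AE) (auto simp: nonneg)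
  finally have "AE x in M. (\<Sum>i. ennreal (f i x)) \<noteq> \<infinity>"
    by (intro nn_integral_PInf_AE) auto
  then show ?thesis
    by eventually_elim (auto intro: summable_suminf_not_top nonneg)
qed

lemma (in finite_measure) integrable_mult_of_bounded:
  fixes f g :: "'a \<Rightarrow> real"
  assumes [measurable]: "f \<in> borel_measurable M" "g \<in> borel_measurable M"
    and f_bounded: "\<And>x. x \<in> space M \<Longrightarrow> \<bar>f x\<bar> \<le> B"
    and g_bounded: "\<And>x. x \<in> space M \<Longrightarrow> \<bar>g x\<bar> \<le> C"
  shows "integrable M (\<lambda>x. f x * g x)"
proof (rule integrable_const_bound[where B="B * C"])
  show "AE x in M. norm (f x * g x) \<le> B * C"
    using f_bounded g_bounded by (intro AE_I2) (auto simp: abs_mult intro: mult_mono order_trans[OF abs_ge_zero])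
qed simp

lemma (in prob_space) expectation_square_sum_orthogonal:
  fixes Z :: "'i \<Rightarrow> 'a \<Rightarrow> real"
  assumes "finite I"
    and integrable: "\<And>a b. a \<in> I \<Longrightarrow> b \<in> I \<Longrightarrow> integrable M (\<lambda>x. Z a x * Z b x)"
    and orthogonal: "\<And>a b. a \<in> I \<Longrightarrow> b \<in> I \<Longrightarrow> a \<noteq> b \<Longrightarrow> expectation (\<lambda>x. Z a x * Z b x) = 0"
  shows "expectation (\<lambda>x. (\<Sum>t\<in>I. Z t x)\<^sup>2) = (\<Sum>t\<in>I. expectation (\<lambda>x. (Z t x)\<^sup>2))"
proof -
  have "expectation (\<lambda>x. (\<Sum>t\<in>I. Z t x)\<^sup>2) = (\<Sum>a\<in>I. \<Sum>b\<in>I. expectation (\<lambda>x. Z a x * Z b x))"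
    unfolding power2_eq_square sum_product by (simp add: integrable integrable_sum)
  also have "\<dots> = (\<Sum>a\<in>I. \<Sum>b\<in>I. if a = b then expectation (\<lambda>x. (Z a x)\<^sup>2) else 0)"
    by (intro sum.cong refl) (auto simp: orthogonal power2_eq_square)
  finally show ?thesis
    using \<open>finite I\<close> by simp
qed

lemma (in prob_space) AE_averages_tendsto_zero_if_orthogonal_bounded:
  fixes Z :: "nat \<Rightarrow> 'a \<Rightarrow> real"
  assumes [measurable]: "\<And>t. Z t \<in> borel_measurable M"
    and bounded: "\<And>t x. x \<in> space M \<Longrightarrow> \<bar>Z t x\<bar> \<le> K"
    and orthogonal: "\<And>a b. a \<noteq> b \<Longrightarrow> expectation (\<lambda>x. Z a x * Z b x) = 0"
  shows "AE x in M. (\<lambda>k. (\<Sum>t\<le>k. Z t x) / real (k + 1)) \<longlonglongrightarrow> 0"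
proof -
  define S where "S n x = (\<Sum>t\<le>n. Z t x)" for n x
  define f where "f r x = (S (r\<^sup>2 - 1) x / real (r\<^sup>2))\<^sup>2" for r x
  have [measurable]: "f r \<in> borel_measurable M" for r
    unfolding f_def S_def by measurable
  obtain x0 where "x0 \<in> space M"
    using not_empty by blast
  then have K: "0 \<le> K"
    using bounded abs_ge_zero order_trans by blast
  have integrable_Z: "integrable M (\<lambda>x. Z a x * Z b x)" for a b
    using bounded by (intro integrable_mult_of_bounded) auto
  have second_moment: "expectation (\<lambda>x. (S n x)\<^sup>2) \<le> real (n + 1) * K\<^sup>2" for n
  proof -
    have "expectation (\<lambda>x. (S n x)\<^sup>2) = (\<Sum>t\<le>n. expectation (\<lambda>x. (Z t x)\<^sup>2))"
      unfolding S_def by (intro expectation_square_sum_orthogonal integrable_Z orthogonal) auto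
    also have "\<dots> \<le> (\<Sum>t\<le>n. K\<^sup>2)"
      using bounded K integrable_Z[of t t for t]
      by (intro sum_mono integral_le_const AE_I2) (auto simp: power2_le_iff_abs_le simp flip: power2_eq_square)
    finally show ?thesis
      by simp
  qed
  have expectation_f: "expectation (f r) \<le> K\<^sup>2 / (real r)\<^sup>2" for r
  proof (cases "r = 0")
    case False
    have "expectation (f r) = expectation (\<lambda>x. (S (r\<^sup>2 - 1) x)\<^sup>2) / (real r) ^ 4"
      unfolding f_def power_divide by (simp flip: power_mult)
    also have "\<dots> \<le> real (r\<^sup>2 - 1 + 1) * K\<^sup>2 / (real r) ^ 4"
      by (intro divide_right_mono second_moment) simp
    also have "\<dots> = K\<^sup>2 / (real r)\<^sup>2"
      using False by (simp add: of_nat_diff field_simps flip: power_mult)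
    finally show ?thesis .
  qed (simp add: f_def[abs_def])
  have "summable (\<lambda>r. expectation (f r))"
  proof (rule summable_comparison_test)
    show "\<exists>N. \<forall>r\<ge>N. norm (expectation (f r)) \<le> K\<^sup>2 / (real r)\<^sup>2"
      using expectation_f by (auto simp: f_def intro!: integral_nonneg_AE)
    show "summable (\<lambda>r. K\<^sup>2 / (real r)\<^sup>2)"
      using summable_mult[OF inverse_power_summable[of 2], of "K\<^sup>2"] by (simp add: field_simps)
  qed
  then have "AE x in M. summable (\<lambda>r. f r x)"
  proof (rule AE_summable_if_summable_expectation[rotated 3])
    show "integrable M (f r)" for r
      using integrable_Z unfolding f_def S_def power_divide power2_eq_square sum_product
      by (simp add: integrable_sum)
  qed (auto simp: f_def)
  with AE_space show ?thesis
  proof eventually_elim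
    case (elim x)
    have step: "\<bar>S (Suc k) x - S k x\<bar> \<le> K" for k
      using bounded[OF elim(1)] by (simp add: S_def)
    have "(\<lambda>r. f r x) \<longlonglongrightarrow> 0"
      using elim(2) by (rule summable_LIMSEQ_zero)
    then have "(\<lambda>r. sqrt (f r x)) \<longlonglongrightarrow> sqrt 0"
      by (rule tendsto_real_sqrt)
    then have "(\<lambda>r. \<bar>S (r\<^sup>2 - 1) x / real (r\<^sup>2)\<bar>) \<longlonglongrightarrow> 0"
      by (simp add: f_def)
    then have "(\<lambda>r. S (r\<^sup>2 - 1) x / real (r\<^sup>2)) \<longlonglongrightarrow> 0"
      by (rule tendsto_rabs_zero_cancel)
    with step have "(\<lambda>k. S k x / real (k + 1)) \<longlonglongrightarrow> 0"
      by (rule averages_tendsto_zero_if_square_averages)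
    then show "(\<lambda>k. (\<Sum>t\<le>k. Z t x) / real (k + 1)) \<longlonglongrightarrow> 0"
      by (simp only: S_def)
  qed
qed

lemma (in prob_space) orthogonal_products_indep_zero_mean:
  fixes X Y :: "'i \<Rightarrow> 'a \<Rightarrow> real"
  assumes X_rv[measurable]: "\<And>t. X t \<in> borel_measurable M"
    and Y_rv[measurable]: "\<And>t. Y t \<in> borel_measurable M"
    and X_bounded: "\<And>t x. x \<in> space M \<Longrightarrow> \<bar>X t x\<bar> \<le> B"
    and Y_bounded: "\<And>t x. x \<in> space M \<Longrightarrow> \<bar>Y t x\<bar> \<le> C"
    and Y_indep: "indep_vars (\<lambda>_. borel) Y UNIV"
    and Y_mean: "\<And>t. expectation (Y t) = 0"
    and XY_indep: "indep_var
        (Pi\<^sub>M UNIV (\<lambda>_. borel)) (\<lambda>x t. X t x) (Pi\<^sub>M UNIV (\<lambda>_. borel)) (\<lambda>x t. Y t x)"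
    and "a \<noteq> b"
  shows "expectation (\<lambda>x. (X a x * Y a x) * (X b x * Y b x)) = 0"
proof -
  have "(\<lambda>f. f a * f b) \<in> Pi\<^sub>M UNIV (\<lambda>_. borel) \<rightarrow>\<^sub>M (borel :: real measure)"
    by measurable
  then have "indep_var borel (\<lambda>x. X a x * X b x) borel (\<lambda>x. Y a x * Y b x)"
    using indep_var_compose[OF XY_indep, of "\<lambda>f. f a * f b" borel "\<lambda>f. f a * f b" borel]
    by (simp add: comp_def)
  then have "expectation (\<lambda>x. (X a x * X b x) * (Y a x * Y b x))
      = expectation (\<lambda>x. X a x * X b x) * expectation (\<lambda>x. Y a x * Y b x)"
    using integrable_mult_of_bounded[OF X_rv X_rv X_bounded X_bounded]
      integrable_mult_of_bounded[OF Y_rv Y_rv Y_bounded Y_bounded]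
    by (rule indep_var_lebesgue_integral)
  moreover have "integrable M (Y t)" for t
    using Y_bounded by (intro integrable_const_bound[where B=C]) auto
  then have "expectation (\<lambda>x. \<Prod>t\<in>{a, b}. Y t x) = (\<Prod>t\<in>{a, b}. expectation (Y t))"
    by (intro indep_vars_lebesgue_integral indep_vars_subset[OF Y_indep]) auto
  ultimately show ?thesis
    using \<open>a \<noteq> b\<close> by (simp add: Y_mean ac_simps)
qed

theorem mainTheorem1:
  fixes M :: "'a measure" and X Y :: "nat \<Rightarrow> 'a \<Rightarrow> real"
  assumes "prob_space M"
    and X_rv: "\<And>t. X t \<in> borel_measurable M"
    and X_bdd: "\<exists>B. \<forall>t. \<forall>\<omega>\<in>space M. \<bar>X t \<omega>\<bar> \<le> B"
    and Y_rv: "\<And>t. Y t \<in> borel_measurable M"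
    and Y_bdd: "\<exists>B. \<forall>t. \<forall>\<omega>\<in>space M. \<bar>Y t \<omega>\<bar> \<le> B"
    and Y_indep: "prob_space.indep_vars M (\<lambda>_. borel) Y UNIV"
    and Y_ident: "\<And>t. distr M borel (Y t) = distr M borel (Y 0)"
    and Y_mean: "\<And>t. prob_space.expectation M (Y t) = 0"
    and XY_indep: "prob_space.indep_var M
        (Pi\<^sub>M UNIV (\<lambda>_. borel)) (\<lambda>\<omega> t. X t \<omega>)
        (Pi\<^sub>M UNIV (\<lambda>_. borel)) (\<lambda>\<omega> t. Y t \<omega>)"
  shows "AE \<omega> in M.
    (\<lambda>k. (\<Sum>t\<le>k. X t \<omega> * Y t \<omega>) / real (k + 1)) \<longlonglongrightarrow> 0"
proof -
  interpret prob_space M by fact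
  obtain B where B: "\<And>t \<omega>. \<omega> \<in> space M \<Longrightarrow> \<bar>X t \<omega>\<bar> \<le> B"
    using X_bdd by blast
  obtain C where C: "\<And>t \<omega>. \<omega> \<in> space M \<Longrightarrow> \<bar>Y t \<omega>\<bar> \<le> C"
    using Y_bdd by blast
  show ?thesis
  proof (rule AE_averages_tendsto_zero_if_orthogonal_bounded)
    show "(\<lambda>\<omega>. X t \<omega> * Y t \<omega>) \<in> borel_measurable M" for t
      using X_rv Y_rv by measurable
    show "\<bar>X t \<omega> * Y t \<omega>\<bar> \<le> B * C" if "\<omega> \<in> space M" for t \<omega>
      unfolding abs_mult using B[OF that] C[OF that]
      by (intro mult_mono) (auto intro: order_trans[OF abs_ge_zero])
    show "expectation (\<lambda>\<omega>. (X a \<omega> * Y a \<omega>) * (X b \<omega> * Y b \<omega>)) = 0" if "a \<noteq> b" for a b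
      using orthogonal_products_indep_zero_mean[OF X_rv Y_rv B C Y_indep Y_mean XY_indep that] .
  qed
qed

end
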